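(* Let $\mathcal{O}:\mathcal{P}\to\mathcal{P}$ be a lowering operator and let $\{f_n\}_{n\ge0}$ be a sequence of polynomials in $\mathcal{P}$ such that $\rho_n f_n=\mathcal{O}(f_{n+1})$ for all $n\ge0$, with $\rho_n\in\mathbb{C}\setminus\{0\}$. Then either $f_n=0$ for all $n\ge0$, or there is $n_0\ge0$ such that $f_{n_0}\neq0$, $f_i=0$ for $0\le i\le n_0-1$ (if $n_0\ge1$), and $\deg(f_{n+1})=\deg(f_n)+1$ for all $n\ge n_0$.
   Context: $\mathcal{P}$ denotes the complex vector space of polynomials in one variable $x$ with complex coefficients. A lowering operator is a linear map $\mathcal{O}:\mathcal{P}\to\mathcal{P}$ such that $\mathcal{O}(1)=0$ and $\deg(\mathcal{O}(x^n))=n-1$ for all $n\ge 1$. *)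

theory Defs
  imports "HOL-Computational_Algebra.Polynomial"
begin

definition lowering_operator :: "(complex poly \<Rightarrow> complex poly) \<Rightarrow> bool" where
  "lowering_operator L \<longleftrightarrow>
     (\<forall>p q. L (p + q) = L p + L q) \<and>
     (\<forall>c p. L (smult c p) = smult c (L p)) \<and>
     L 1 = 0 \<and>
     (\<forall>n\<ge>1. L (monom 1 n) \<noteq> 0 \<and> degree (L (monom 1 n)) = n - 1)"

end

theory Submission
  imports Defs
begin

text \<open>A lowering operator lowers the degree of every nonconstant polynomial by exactly one
  and kills the constants. Hence \<open>\<rho>\<^sub>n f\<^sub>n = L f\<^sub>n\<^sub>+\<^sub>1\<close> with \<open>\<rho>\<^sub>n \<noteq> 0\<close> forces
  \<open>deg f\<^sub>n\<^sub>+\<^sub>1 = deg f\<^sub>n + 1\<close> as soon as \<open>f\<^sub>n \<noteq> 0\<close>, and then \<open>f\<^sub>n\<^sub>+\<^sub>1 \<noteq> 0\<close> again;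
  so from the first nonzero term on the degrees increase by one at each step.\<close>

lemma degree_diff_lead_monom_less:
  fixes q :: "'a::comm_ring_1 poly"
  assumes "degree q > 0"
  shows "degree (q - monom (lead_coeff q) (degree q)) < degree q"
  using assms by (intro degree_lessI) (auto simp: coeff_eq_0)

lemma lowering_operator_const:
  assumes "lowering_operator L" and "degree q = 0"
  shows "L q = 0"
proof -
  obtain c where "q = [:c:]"
    using \<open>degree q = 0\<close> degree_eq_zeroE by blast
  then have "q = smult c 1"
    by simp
  moreover have "L (smult c 1) = smult c (L 1)" and "L 1 = 0"
    using assms(1) unfolding lowering_operator_def by blast+
  ultimately show ?thesis
    by simp
qed

lemma lowering_operator_degree:
  assumes L: "lowering_operator L" and "degree q > 0"
  shows "L q \<noteq> 0 \<and> degree (L q) = degree q - 1"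
  using \<open>degree q > 0\<close>
proof (induction "degree q" arbitrary: q rule: less_induct)
  case less
  define d where "d = degree q"
  define c where "c = lead_coeff q"
  define r where "r = q - monom c d"
  have "c \<noteq> 0"
    using less.prems by (auto simp: c_def)
  have "degree r < d"
    using degree_diff_lead_monom_less[OF less.prems] by (simp add: r_def c_def d_def)
  have "q = smult c (monom 1 d) + r"
    by (simp add: r_def smult_monom)
  then have Lq: "L q = smult c (L (monom 1 d)) + L r"
    using L unfolding lowering_operator_def by simp
  have lead_part: "degree (smult c (L (monom 1 d))) = d - 1"
    using L less.prems \<open>c \<noteq> 0\<close> unfolding lowering_operator_def d_def by simp
  have "L r = 0 \<or> degree (L r) < d - 1"
  proof (cases "degree r = 0")
    case True
    then show ?thesis using lowering_operator_const[OF L] by simp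
  next
    case False
    then have "degree (L r) = degree r - 1"
      using less.hyps \<open>degree r < d\<close> by (simp add: d_def)
    then show ?thesis using False \<open>degree r < d\<close> by linarith
  qed
  then have "degree (L q) = d - 1"
    using Lq lead_part by (auto simp: degree_add_eq_left)
  moreover have "L q \<noteq> 0"
  proof
    assume "L q = 0"
    then have "smult c (L (monom 1 d)) = - L r"
      using Lq by (simp add: eq_neg_iff_add_eq_0)
    then show False
      using \<open>L r = 0 \<or> degree (L r) < d - 1\<close> lead_part L less.prems \<open>c \<noteq> 0\<close>
      by (auto simp: lowering_operator_def d_def)
  qed
  ultimately show ?case by (simp add: d_def)
qed

lemma lowering_operator_preimage_step:
  assumes "lowering_operator L" and "c \<noteq> 0" and "smult c p = L q" and "p \<noteq> 0"
  shows "q \<noteq> 0 \<and> degree q = degree p + 1"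
proof -
  have "L q \<noteq> 0"
    using assms(2-4) by (metis smult_eq_0_iff)
  then have "degree q > 0"
    using lowering_operator_const[OF assms(1)] by blast
  moreover have "degree (L q) = degree p"
    using assms(3) \<open>c \<noteq> 0\<close> by (metis degree_smult_eq)
  ultimately show ?thesis
    using lowering_operator_degree[OF assms(1)] by fastforce
qed

theorem proposition1:
  fixes L :: "complex poly \<Rightarrow> complex poly"
    and f :: "nat \<Rightarrow> complex poly"
    and \<rho> :: "nat \<Rightarrow> complex"
  assumes "lowering_operator L"
    and "\<And>n. \<rho> n \<noteq> 0"
    and "\<And>n. smult (\<rho> n) (f n) = L (f (Suc n))"
  shows "(\<forall>n. f n = 0) \<or>
         (\<exists>n0. f n0 \<noteq> 0 \<and> (\<forall>i<n0. f i = 0) \<and>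
               (\<forall>n\<ge>n0. degree (f (Suc n)) = degree (f n) + 1))"
proof (cases "\<forall>n. f n = 0")
  case False
  define n0 where "n0 = (LEAST n. f n \<noteq> 0)"
  have step: "f n \<noteq> 0 \<Longrightarrow> f (Suc n) \<noteq> 0 \<and> degree (f (Suc n)) = degree (f n) + 1" for n
    using lowering_operator_preimage_step[OF assms(1,2,3)] .
  have "f n0 \<noteq> 0"
    using False unfolding n0_def by (metis (mono_tags) LeastI)
  moreover have "\<forall>i<n0. f i = 0"
    unfolding n0_def using not_less_Least by blast
  moreover have "f n \<noteq> 0" if "n \<ge> n0" for n
    using that \<open>f n0 \<noteq> 0\<close> step by (induction n rule: dec_induct) auto
  ultimately show ?thesis
    using step by blast
qed simp

end
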